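(* Let $\Lambda,\mu,\beta,\alpha,\gamma,\delta>0$, $\sigma\in[0,1)$, $\xi\ge 0$, $N_{old},\kappa,\kappa_{old}\in[0,1]$, and set $\Delta=\delta\left[(1-\kappa_{old})N_{old}+(1-\kappa)(1-N_{old})\right]$. Consider the system \begin{align*} \frac{dS}{dt}&=\Lambda-\mu S-\beta(1-\sigma)SI+\xi R,\\ \frac{dE}{dt}&=\beta(1-\sigma)SI-(\mu+\alpha)E,\\ \frac{dI}{dt}&=\alpha E-(\mu+\gamma)I-\Delta I,\\ \frac{dR}{dt}&=\gamma I-\mu R-\xi R, \end{align*} and define $$R_0=\frac{\alpha\beta\Lambda(1-\sigma)}{\mu(\mu+\alpha)(\mu+\gamma+\Delta)}.$$ Let $E_{EE}=(S^*,E^*,I^*,R^* )$ denote the endemic equilibrium, i.e. the equilibrium of this system with $S^*=\frac{\Lambda}{\mu R_0}$ and $E^*,I^*,R^*>0$. If $R_0>1$, then $E_{EE}$ is a locally asymptotically stable equilibrium of this system.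
   Context: This is the $(S,E,I,R)$ part of a modified SEIRS epidemic model (the death compartment $D$, with $dD/dt=\Delta I$, does not feed back and is omitted). $\Lambda$ is a birth rate, $\mu$ a natural death rate, $\beta$ the transmission rate, $\alpha$ the rate of becoming infectious, $\gamma$ the recovery rate, $\sigma$ the control-action efficiency, $\xi$ the resusceptibility fraction, $\Delta$ the COVID-19 death rate, and $R_0$ the basic reproduction number with control action. When $R_0>1$ there is exactly one equilibrium with positive $E,I,R$ components, and it has $S^*=\Lambda/(\mu R_0)$. *)

theory Defs
  imports "HOL-Analysis.Analysis"
begin

definition is_solution :: "('a::real_normed_vector \<Rightarrow> 'a) \<Rightarrow> (real \<Rightarrow> 'a) \<Rightarrow> real set \<Rightarrow> bool" where
  "is_solution f x T \<longleftrightarrow> (\<forall>t\<in>T. (x has_vector_derivative f (x t)) (at t within T))"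

definition equilibrium :: "('a::real_normed_vector \<Rightarrow> 'a) \<Rightarrow> 'a \<Rightarrow> bool" where
  "equilibrium f xs \<longleftrightarrow> f xs = 0"

definition lyapunov_stable :: "('a::real_normed_vector \<Rightarrow> 'a) \<Rightarrow> 'a \<Rightarrow> bool" where
  "lyapunov_stable f xs \<longleftrightarrow>
     (\<forall>\<epsilon>>0. \<exists>\<delta>>0. \<forall>x T. is_solution f x {0..T} \<and> dist (x 0) xs < \<delta>
        \<longrightarrow> (\<forall>t\<in>{0..T}. dist (x t) xs < \<epsilon>))"

definition locally_attractive :: "('a::real_normed_vector \<Rightarrow> 'a) \<Rightarrow> 'a \<Rightarrow> bool" where
  "locally_attractive f xs \<longleftrightarrow>
     (\<exists>\<delta>>0. \<forall>x. is_solution f x {0..} \<and> dist (x 0) xs < \<delta> \<longrightarrow> (x \<longlongrightarrow> xs) at_top)"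

definition locally_asymptotically_stable :: "('a::real_normed_vector \<Rightarrow> 'a) \<Rightarrow> 'a \<Rightarrow> bool" where
  "locally_asymptotically_stable f xs \<longleftrightarrow>
     equilibrium f xs \<and> lyapunov_stable f xs \<and> locally_attractive f xs"

definition covid_Delta :: "real \<Rightarrow> real \<Rightarrow> real \<Rightarrow> real \<Rightarrow> real" where
  "covid_Delta \<delta> N_old \<kappa> \<kappa>_old = \<delta> * ((1 - \<kappa>_old) * N_old + (1 - \<kappa>) * (1 - N_old))"

definition R0 :: "real \<Rightarrow> real \<Rightarrow> real \<Rightarrow> real \<Rightarrow> real \<Rightarrow> real \<Rightarrow> real \<Rightarrow> real" where
  "R0 \<Lambda> \<mu> \<beta> \<alpha> \<gamma> \<sigma> \<Delta> = (\<alpha> * \<beta> * \<Lambda> * (1 - \<sigma>)) / (\<mu> * (\<mu> + \<alpha>) * (\<mu> + \<gamma> + \<Delta>))"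

definition seir_field :: "real \<Rightarrow> real \<Rightarrow> real \<Rightarrow> real \<Rightarrow> real \<Rightarrow> real \<Rightarrow> real \<Rightarrow> real \<Rightarrow>
    real \<times> real \<times> real \<times> real \<Rightarrow> real \<times> real \<times> real \<times> real" where
  "seir_field \<Lambda> \<mu> \<beta> \<alpha> \<gamma> \<sigma> \<xi> \<Delta> = (\<lambda>(S, E, I, R).
     (\<Lambda> - \<mu> * S - \<beta> * (1 - \<sigma>) * S * I + \<xi> * R,
      \<beta> * (1 - \<sigma>) * S * I - (\<mu> + \<alpha>) * E,
      \<alpha> * E - (\<mu> + \<gamma>) * I - \<Delta> * I,
      \<gamma> * I - \<mu> * R - \<xi> * R))"

end

theory Submission
  imports Defs "HOL-Real_Asymp.Real_Asymp"
begin

text \<open>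
  In the coordinates X, Z (relative deviations of S and I from the endemic equilibrium) and
  W, D (relative deviations of E and R, each taken relative to Z) the system becomes
  u' = L u + N u with an explicit linear part L and a quadratic part N.  An explicit quadratic
  form V0 has a negative semidefinite derivative along L; adding a small multiple of X Z + D^2
  makes both the form and its derivative definite, by a compactness argument on the unit sphere.
  By homogeneity the cubic contribution of N is dominated near 0, so this Lyapunov function
  decays exponentially along solutions starting near the equilibrium, which yields stability
  and attractivity.
\<close>

lemma homogeneous_eq_norm_sgn:
  fixes q :: "'a::real_normed_vector \<Rightarrow> real"
  assumes hom: "\<And>t u. t \<ge> 0 \<Longrightarrow> q (t *\<^sub>R u) = t ^ k * q u" and k: "k > 0"
  shows "q u = norm u ^ k * q (sgn u)"
proof (cases "u = 0")
  case True
  then show ?thesis using hom[of 0 0] k by simp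
next
  case False
  then have "u = norm u *\<^sub>R sgn u" by (simp add: sgn_div_norm)
  then show ?thesis by (metis hom norm_ge_zero)
qed

lemma homogeneous_bounded_below:
  fixes q :: "'a::euclidean_space \<Rightarrow> real"
  assumes cont: "continuous_on UNIV q"
    and hom: "\<And>t u. t \<ge> 0 \<Longrightarrow> q (t *\<^sub>R u) = t ^ k * q u" and k: "k > 0"
    and pos: "\<And>u. norm u = 1 \<Longrightarrow> q u > 0"
  obtains m where "m > 0" "\<And>u. m * norm u ^ k \<le> q u"
proof -
  have "sphere (0::'a) 1 \<noteq> {}" by simp
  then obtain u0 where u0: "u0 \<in> sphere 0 1" "\<And>y. y \<in> sphere 0 1 \<Longrightarrow> q u0 \<le> q y"
    using continuous_attains_inf[OF compact_sphere _ continuous_on_subset[OF cont subset_UNIV]] by blast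
  have "q u0 * norm u ^ k \<le> q u" for u
  proof (cases "u = 0")
    case True
    then show ?thesis using homogeneous_eq_norm_sgn[OF hom k, of u] k by (simp add: zero_power)
  next
    case False
    then have "q u0 \<le> q (sgn u)" using u0(2) by (simp add: norm_sgn)
    then have "q u0 * norm u ^ k \<le> q (sgn u) * norm u ^ k" by (rule mult_right_mono) simp
    then show ?thesis using homogeneous_eq_norm_sgn[OF hom k, of u] by (simp add: mult.commute)
  qed
  moreover have "q u0 > 0" using u0 pos by simp
  ultimately show ?thesis using that by blast
qed

lemma homogeneous_bounded_above:
  fixes q :: "'a::euclidean_space \<Rightarrow> real"
  assumes cont: "continuous_on UNIV q"
    and hom: "\<And>t u. t \<ge> 0 \<Longrightarrow> q (t *\<^sub>R u) = t ^ k * q u" and k: "k > 0"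
  obtains C where "C > 0" "\<And>u. \<bar>q u\<bar> \<le> C * norm u ^ k"
proof -
  have "sphere (0::'a) 1 \<noteq> {}" by simp
  moreover have "continuous_on UNIV (\<lambda>u. \<bar>q u\<bar>)" using cont by (intro continuous_intros)
  ultimately obtain u0 where u0: "u0 \<in> sphere 0 1" "\<And>y. y \<in> sphere 0 1 \<Longrightarrow> \<bar>q y\<bar> \<le> \<bar>q u0\<bar>"
    using continuous_attains_sup[OF compact_sphere _ continuous_on_subset[OF _ subset_UNIV]] by blast
  have "q 0 = 0" using hom[of 0 0] k by (simp add: zero_power)
  have "\<bar>q u\<bar> \<le> (\<bar>q u0\<bar> + 1) * norm u ^ k" for u
  proof -
    have "\<bar>q (sgn u)\<bar> \<le> \<bar>q u0\<bar> + 1"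
      using u0(2)[of "sgn u"] \<open>q 0 = 0\<close> by (cases "u = 0") (auto simp: norm_sgn)
    have "q u = norm u ^ k * q (sgn u)" by (rule homogeneous_eq_norm_sgn[OF hom k])
    then have "\<bar>q u\<bar> = norm u ^ k * \<bar>q (sgn u)\<bar>" by (simp add: abs_mult)
    also have "\<dots> \<le> norm u ^ k * (\<bar>q u0\<bar> + 1)"
      by (rule mult_left_mono) (use \<open>\<bar>q (sgn u)\<bar> \<le> \<bar>q u0\<bar> + 1\<close> in simp_all)
    finally show ?thesis by (simp add: mult.commute)
  qed
  then show ?thesis using that[of "\<bar>q u0\<bar> + 1"] by simp
qed

lemma finsler_sphere:
  fixes q0 q1 :: "'a::euclidean_space \<Rightarrow> real"
  assumes cont0: "continuous_on UNIV q0" and cont1: "continuous_on UNIV q1"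
    and nonneg: "\<And>u. norm u = 1 \<Longrightarrow> q0 u \<ge> 0"
    and kernel: "\<And>u. norm u = 1 \<Longrightarrow> q0 u = 0 \<Longrightarrow> q1 u > 0"
  obtains \<epsilon> where "\<epsilon> > 0" "\<And>e u. 0 < e \<Longrightarrow> e \<le> \<epsilon> \<Longrightarrow> norm u = 1 \<Longrightarrow> q0 u + e * q1 u > 0"
proof -
  have "sphere (0::'a) 1 \<noteq> {}" by simp
  moreover have "continuous_on UNIV (\<lambda>u. \<bar>q1 u\<bar>)" using cont1 by (intro continuous_intros)
  ultimately obtain u1 where u1: "u1 \<in> sphere 0 1" "\<And>u. u \<in> sphere 0 1 \<Longrightarrow> \<bar>q1 u\<bar> \<le> \<bar>q1 u1\<bar>"
    using continuous_attains_sup[OF compact_sphere _ continuous_on_subset[OF _ subset_UNIV]] by blast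
  define C where "C = \<bar>q1 u1\<bar>"
  have C: "C \<ge> 0" "\<And>u. norm u = 1 \<Longrightarrow> \<bar>q1 u\<bar> \<le> C" using u1 by (auto simp: C_def)
  have "\<exists>\<alpha>>0. \<forall>u. norm u = 1 \<longrightarrow> q1 u \<le> 0 \<longrightarrow> \<alpha> \<le> q0 u"
  proof -
    define K where "K = sphere (0::'a) 1 \<inter> {u. q1 u \<le> 0}"
    have "compact K"
      unfolding K_def using closed_Collect_le[OF cont1 continuous_on_const]
      by (intro compact_Int_closed compact_sphere) simp
    show ?thesis
    proof (cases "K = {}")
      case True
      then show ?thesis by (intro exI[of _ 1]) (auto simp: K_def)
    next
      case False
      then obtain u0 where u0: "u0 \<in> K" "\<And>u. u \<in> K \<Longrightarrow> q0 u0 \<le> q0 u"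
        using continuous_attains_inf[OF \<open>compact K\<close> _ continuous_on_subset[OF cont0 subset_UNIV]] by blast
      then have "q0 u0 > 0"
        using nonneg[of u0] kernel[of u0] by (fastforce simp: K_def)
      then show ?thesis using u0(2) by (auto simp: K_def)
    qed
  qed
  then obtain \<alpha> where \<alpha>: "\<alpha> > 0" "\<And>u. norm u = 1 \<Longrightarrow> q1 u \<le> 0 \<Longrightarrow> \<alpha> \<le> q0 u" by blast
  show ?thesis
  proof
    show "\<alpha> / (C + 1) > 0" using \<alpha> C by simp
    fix e and u :: 'a
    assume e: "0 < e" "e \<le> \<alpha> / (C + 1)" and u: "norm u = 1"
    show "q0 u + e * q1 u > 0"
    proof (cases "q1 u > 0")
      case True
      then show ?thesis using nonneg[OF u] e by (simp add: add_nonneg_pos)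
    next
      case False
      have "e * \<bar>q1 u\<bar> \<le> \<alpha> / (C + 1) * C" using e C u by (intro mult_mono) auto
      also have "\<dots> < \<alpha>" using \<alpha> C by (simp add: field_simps)
      finally show ?thesis using \<alpha>(2)[OF u] False abs_ge_minus_self[of "e * q1 u"] e
        by (simp add: abs_mult)
    qed
  qed
qed

lemma nonincreasing_while_below:
  fixes \<psi> :: "real \<Rightarrow> real"
  assumes "0 \<le> t" and cont: "continuous_on {0..t} \<psi>" and start: "\<psi> 0 < \<beta>"
    and deriv: "\<And>s. 0 < s \<Longrightarrow> s < t \<Longrightarrow> \<psi> s < \<beta> \<Longrightarrow>
      \<exists>y. (\<psi> has_real_derivative y) (at s) \<and> y \<le> 0"
  shows "\<psi> t \<le> \<psi> 0"
proof (rule ccontr)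
  assume "\<not> \<psi> t \<le> \<psi> 0"
  define \<gamma> where "\<gamma> = (\<psi> 0 + min (\<psi> t) \<beta>) / 2"
  have \<gamma>: "\<psi> 0 < \<gamma>" "\<gamma> < \<psi> t" "\<gamma> < \<beta>"
    using \<open>\<not> \<psi> t \<le> \<psi> 0\<close> start unfolding \<gamma>_def by auto
  \<comment> \<open>Inf A is the first time at which \<psi> reaches the level \<gamma>\<close>
  define A where "A = {0..t} \<inter> \<psi> -` {\<gamma>..}"
  have "closed A" unfolding A_def by (rule continuous_closed_preimage[OF cont]) auto
  moreover have "t \<in> A" "bdd_below A" using \<gamma> \<open>0 \<le> t\<close> by (auto simp: A_def)
  ultimately have s0: "Inf A \<in> A" using closed_contains_Inf by blast
  then have s0_range: "0 \<le> Inf A" "Inf A \<le> t" "\<gamma> \<le> \<psi> (Inf A)" by (auto simp: A_def)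
  have "\<psi> (Inf A) \<le> \<psi> 0"
  proof (rule DERIV_nonpos_imp_decreasing_open[OF s0_range(1)])
    show "continuous_on {0..Inf A} \<psi>" using cont s0_range by (auto elim: continuous_on_subset)
    fix s assume s: "0 < s" "s < Inf A"
    have "s \<notin> A" using s \<open>bdd_below A\<close> cInf_lower[of s A] by linarith
    then have "\<psi> s < \<beta>" using s s0_range \<gamma> by (auto simp: A_def)
    then show "\<exists>y. (\<psi> has_real_derivative y) (at s) \<and> y \<le> 0" using deriv s s0_range by simp
  qed
  then show False using s0_range \<gamma> by simp
qed

lemma exp_decay_tendsto_zero: "(a::real) > 0 \<Longrightarrow> ((\<lambda>t. K * exp (- a * t)) \<longlongrightarrow> 0) at_top"
  by real_asymp

locale exponential_lyapunov =
  fixes f :: "'a::real_normed_vector \<Rightarrow> 'a" and xs :: 'a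
    and V :: "'a \<Rightarrow> real" and DV :: "'a \<Rightarrow> 'a \<Rightarrow> real" and m M c r :: real
  assumes V_deriv: "\<And>y. (V has_derivative DV y) (at y)"
    and V_lower: "\<And>y. m * (norm (y - xs))\<^sup>2 \<le> V y"
    and V_upper: "\<And>y. V y \<le> M * (norm (y - xs))\<^sup>2"
    and V_decay: "\<And>y. norm (y - xs) < r \<Longrightarrow> DV y (f y) \<le> - c * V y"
    and m_pos: "m > 0" and M_pos: "M > 0" and c_pos: "c > 0" and r_pos: "r > 0"
begin

lemma V_nonneg: "V y \<ge> 0"
  using V_lower[of y] m_pos by (meson order_trans zero_le_power2 mult_nonneg_nonneg less_imp_le)

lemma V_decay_solution:
  assumes sol: "is_solution f x {0..T}" and small: "V (x 0) < m * r\<^sup>2"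
    and t: "0 \<le> t" "t \<le> T"
  shows "V (x t) \<le> V (x 0) * exp (- c * t)"
proof -
  define \<psi> where "\<psi> s = V (x s) * exp (c * s)" for s
  have deriv: "(\<psi> has_real_derivative (DV (x s) (f (x s)) + c * V (x s)) * exp (c * s))
      (at s within {0..T})" if "s \<in> {0..T}" for s
  proof -
    have "(x has_vector_derivative f (x s)) (at s within {0..T})"
      using sol that unfolding is_solution_def by blast
    then have "((V \<circ> x) has_vector_derivative DV (x s) (f (x s))) (at s within {0..T})"
      by (rule vector_derivative_diff_chain_within) (rule has_derivative_at_withinI[OF V_deriv])
    then have "((\<lambda>s. V (x s)) has_real_derivative DV (x s) (f (x s))) (at s within {0..T})"
      by (simp add: has_real_derivative_iff_has_vector_derivative o_def)
    moreover have "((\<lambda>s. exp (c * s)) has_real_derivative exp (c * s) * c) (at s within {0..T})"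
      by (auto intro!: derivative_eq_intros)
    ultimately show ?thesis
      unfolding \<psi>_def by (auto dest: DERIV_mult simp: algebra_simps)
  qed
  have "\<psi> t \<le> \<psi> 0"
  proof (rule nonincreasing_while_below[OF t(1), where \<beta> = "m * r\<^sup>2"])
    show "\<psi> 0 < m * r\<^sup>2" using small by (simp add: \<psi>_def)
    show "continuous_on {0..t} \<psi>"
      using deriv t by (metis DERIV_continuous atLeastAtMost_iff continuous_on_eq_continuous_within
          continuous_on_subset order_trans subsetI)
    fix s assume s: "0 < s" "s < t" "\<psi> s < m * r\<^sup>2"
    have "V (x s) \<le> \<psi> s"
      unfolding \<psi>_def using V_nonneg[of "x s"] c_pos s(1) by (simp add: mult_le_cancel_left1)
    then have "m * (norm (x s - xs))\<^sup>2 < m * r\<^sup>2" using V_lower[of "x s"] s(3) by linarith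
    then have "norm (x s - xs) < r" using m_pos r_pos by (simp add: power_less_imp_less_base)
    then have "DV (x s) (f (x s)) + c * V (x s) \<le> 0" using V_decay by fastforce
    then have "(DV (x s) (f (x s)) + c * V (x s)) * exp (c * s) \<le> 0"
      by (simp add: mult_nonpos_nonneg)
    moreover have "s \<in> interior {0..T}" using s t by auto
    then have "(\<psi> has_real_derivative (DV (x s) (f (x s)) + c * V (x s)) * exp (c * s)) (at s)"
      using deriv[of s] at_within_interior by (metis interior_subset subsetD)
    ultimately show "\<exists>y. (\<psi> has_real_derivative y) (at s) \<and> y \<le> 0" by blast
  qed
  then have "V (x t) * exp (c * t) * exp (- c * t) \<le> V (x 0) * exp (- c * t)"
    by (simp add: \<psi>_def)
  then show ?thesis by (simp add: mult.assoc flip: exp_add)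
qed

lemma solution_bound:
  assumes sol: "is_solution f x {0..T}" and t: "0 \<le> t" "t \<le> T"
    and \<rho>: "0 < \<rho>" "\<rho> \<le> r" and start: "norm (x 0 - xs) < \<rho> * sqrt (m / M)"
  shows "V (x 0) < m * \<rho>\<^sup>2" and "m * (norm (x t - xs))\<^sup>2 \<le> V (x 0) * exp (- c * t)"
proof -
  have "(norm (x 0 - xs))\<^sup>2 < (\<rho> * sqrt (m / M))\<^sup>2"
    using start by (intro power_strict_mono) auto
  also have "\<dots> = m * \<rho>\<^sup>2 / M" using m_pos M_pos by (simp add: power_mult_distrib)
  finally have "M * (norm (x 0 - xs))\<^sup>2 < m * \<rho>\<^sup>2" using M_pos by (simp add: field_simps)
  then show small: "V (x 0) < m * \<rho>\<^sup>2" using V_upper[of "x 0"] by linarith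
  also have "\<dots> \<le> m * r\<^sup>2" using \<rho> m_pos by (intro mult_left_mono power_mono) auto
  finally have "V (x t) \<le> V (x 0) * exp (- c * t)" by (rule V_decay_solution[OF sol _ t])
  then show "m * (norm (x t - xs))\<^sup>2 \<le> V (x 0) * exp (- c * t)"
    using V_lower[of "x t"] by linarith
qed

lemma lyapunov_stable: "lyapunov_stable f xs"
  unfolding lyapunov_stable_def
proof (intro allI impI)
  fix \<epsilon> :: real assume "\<epsilon> > 0"
  define \<rho> where "\<rho> = min r \<epsilon>"
  have \<rho>: "0 < \<rho>" "\<rho> \<le> r" "\<rho> \<le> \<epsilon>" using r_pos \<open>\<epsilon> > 0\<close> by (auto simp: \<rho>_def)
  show "\<exists>\<delta>>0. \<forall>x T. is_solution f x {0..T} \<and> dist (x 0) xs < \<delta> \<longrightarrow> (\<forall>t\<in>{0..T}. dist (x t) xs < \<epsilon>)"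
  proof (intro exI[of _ "\<rho> * sqrt (m / M)"] conjI allI impI ballI)
    show "0 < \<rho> * sqrt (m / M)" using \<rho> m_pos M_pos by simp
    fix x T t
    assume "is_solution f x {0..T} \<and> dist (x 0) xs < \<rho> * sqrt (m / M)" and t: "t \<in> {0..T}"
    then have sol: "is_solution f x {0..T}" and start: "norm (x 0 - xs) < \<rho> * sqrt (m / M)"
      by (auto simp: dist_norm)
    have "m * (norm (x t - xs))\<^sup>2 \<le> V (x 0) * exp (- c * t)"
      using solution_bound(2)[OF sol _ _ \<rho>(1,2) start] t by simp
    also have "\<dots> \<le> V (x 0)" using V_nonneg[of "x 0"] c_pos t by (simp add: mult_left_le)
    also have "\<dots> < m * \<rho>\<^sup>2" by (rule solution_bound(1)[OF sol _ _ \<rho>(1,2) start]) (use t in auto)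
    finally have "norm (x t - xs) < \<rho>"
      using m_pos \<rho> by (simp add: power_less_imp_less_base)
    then show "dist (x t) xs < \<epsilon>" using \<rho> by (simp add: dist_norm)
  qed
qed

lemma locally_attractive: "locally_attractive f xs"
  unfolding locally_attractive_def
proof (intro exI[of _ "r * sqrt (m / M)"] conjI allI impI)
  show "0 < r * sqrt (m / M)" using r_pos m_pos M_pos by simp
  fix x assume "is_solution f x {0..} \<and> dist (x 0) xs < r * sqrt (m / M)"
  then have sol: "is_solution f x {0..T}" for T
    unfolding is_solution_def
    by (meson atLeastAtMost_iff atLeast_iff has_vector_derivative_within_subset subsetI)
  have start: "norm (x 0 - xs) < r * sqrt (m / M)"
    using \<open>is_solution f x {0..} \<and> dist (x 0) xs < r * sqrt (m / M)\<close> by (simp add: dist_norm)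
  define K where "K = sqrt (V (x 0) / m)"
  have bound: "norm (x t - xs) \<le> K * exp (- (c / 2) * t)" if "t \<ge> 0" for t
  proof (rule power2_le_imp_le)
    have "(norm (x t - xs))\<^sup>2 \<le> V (x 0) / m * exp (- c * t)"
      using solution_bound(2)[OF sol[of t] that order_refl r_pos order_refl start] m_pos
      by (simp add: field_simps)
    also have "\<dots> = (K * exp (- (c / 2) * t))\<^sup>2"
    proof -
      have "(exp (- (c / 2) * t))\<^sup>2 = exp (- c * t)" by (simp add: power2_eq_square flip: exp_add)
      moreover have "K\<^sup>2 = V (x 0) / m" using V_nonneg[of "x 0"] m_pos by (simp add: K_def)
      ultimately show ?thesis by (simp only: power_mult_distrib)
    qed
    finally show "(norm (x t - xs))\<^sup>2 \<le> (K * exp (- (c / 2) * t))\<^sup>2" .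
    show "0 \<le> K * exp (- (c / 2) * t)" using V_nonneg[of "x 0"] m_pos by (simp add: K_def)
  qed
  have "((\<lambda>t. norm (x t - xs)) \<longlongrightarrow> 0) at_top"
  proof (rule tendsto_sandwich[OF _ _ tendsto_const exp_decay_tendsto_zero])
    show "\<forall>\<^sub>F t in at_top. 0 \<le> norm (x t - xs)" by simp
    show "\<forall>\<^sub>F t in at_top. norm (x t - xs) \<le> K * exp (- (c / 2) * t)"
      using eventually_ge_at_top[of "0::real"] by (rule eventually_mono) (rule bound)
    show "c / 2 > 0" using c_pos by simp
  qed
  then show "(x \<longlongrightarrow> xs) at_top"
    by (simp add: tendsto_norm_zero_iff LIM_zero_iff)
qed

lemma locally_asymptotically_stable:
  assumes "f xs = 0"
  shows "locally_asymptotically_stable f xs"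
  using assms lyapunov_stable locally_attractive
  unfolding locally_asymptotically_stable_def equilibrium_def by simp

end

lemma exponential_lyapunov_change_coordinates:
  fixes L :: "'a::euclidean_space \<Rightarrow> 'b::euclidean_space" and F :: "'b \<Rightarrow> 'b"
  assumes L: "linear L" "inj L"
    and conj: "\<And>x. L (f x) = F (L (x - xs))"
    and Q_deriv: "\<And>u. (Q has_derivative DQ u) (at u)"
    and Q_lower: "\<And>u. m * (norm u)\<^sup>2 \<le> Q u" and Q_upper: "\<And>u. Q u \<le> M * (norm u)\<^sup>2"
    and Q_decay: "\<And>u. norm u < r \<Longrightarrow> DQ u (F u) \<le> - c * Q u"
    and pos: "m > 0" "M > 0" "c > 0" "r > 0"
  obtains m' M' r' where
    "exponential_lyapunov f xs (\<lambda>x. Q (L (x - xs))) (\<lambda>x. DQ (L (x - xs)) \<circ> L) m' M' c r'"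
proof -
  obtain B where B: "B > 0" "\<And>y. B * norm y \<le> norm (L y)"
    using linear_inj_bounded_below_pos[OF L] by blast
  obtain C where C: "C > 0" "\<And>y. norm (L y) \<le> C * norm y"
    using linear_bounded_pos[OF L(1)] by blast
  have shift_deriv: "((\<lambda>x. L (x - xs)) has_derivative L) (at y)" for y
    using bounded_linear.has_derivative[OF linear_conv_bounded_linear[THEN iffD1, OF L(1)]
        has_derivative_diff[OF has_derivative_ident has_derivative_const]] by simp
  show ?thesis
  proof (rule that, unfold_locales)
    show "((\<lambda>x. Q (L (x - xs))) has_derivative DQ (L (y - xs)) \<circ> L) (at y)" for y
      using diff_chain_at[OF shift_deriv Q_deriv] by (simp add: o_def)
    show "m * B\<^sup>2 * (norm (y - xs))\<^sup>2 \<le> Q (L (y - xs))" for y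
    proof -
      have "m * B\<^sup>2 * (norm (y - xs))\<^sup>2 = m * (B * norm (y - xs))\<^sup>2" by (simp add: power_mult_distrib)
      also have "\<dots> \<le> m * (norm (L (y - xs)))\<^sup>2"
        using B pos by (intro mult_left_mono power_mono) auto
      finally show ?thesis using Q_lower[of "L (y - xs)"] by linarith
    qed
    show "Q (L (y - xs)) \<le> M * C\<^sup>2 * (norm (y - xs))\<^sup>2" for y
    proof -
      have "M * (norm (L (y - xs)))\<^sup>2 \<le> M * (C * norm (y - xs))\<^sup>2"
        using C pos by (intro mult_left_mono power_mono) auto
      then show ?thesis using Q_upper[of "L (y - xs)"] by (simp add: power_mult_distrib)
    qed
    show "(DQ (L (y - xs)) \<circ> L) (f y) \<le> - c * Q (L (y - xs))" if "norm (y - xs) < r / C" for y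
    proof -
      have "norm (L (y - xs)) < r"
        using C(2)[of "y - xs"] that C(1) by (simp add: field_simps)
      then show ?thesis using Q_decay by (simp add: conj)
    qed
  qed (use pos B C in auto)
qed

lemma local_quadratic_lyapunov:
  fixes Q G C :: "'a::euclidean_space \<Rightarrow> real"
  assumes "continuous_on UNIV Q" "continuous_on UNIV G" "continuous_on UNIV C"
    and Q_hom: "\<And>t u. t \<ge> 0 \<Longrightarrow> Q (t *\<^sub>R u) = t\<^sup>2 * Q u"
    and G_hom: "\<And>t u. t \<ge> 0 \<Longrightarrow> G (t *\<^sub>R u) = t\<^sup>2 * G u"
    and C_hom: "\<And>t u. t \<ge> 0 \<Longrightarrow> C (t *\<^sub>R u) = t ^ 3 * C u"
    and Q_pos: "\<And>u. norm u = 1 \<Longrightarrow> Q u > 0" and G_neg: "\<And>u. norm u = 1 \<Longrightarrow> G u < 0"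
  obtains m M c r where "m > 0" "M > 0" "c > 0" "r > 0"
    "\<And>u. m * (norm u)\<^sup>2 \<le> Q u" "\<And>u. Q u \<le> M * (norm u)\<^sup>2"
    "\<And>u. norm u < r \<Longrightarrow> G u + C u \<le> - c * Q u"
proof -
  obtain m where m: "m > 0" "\<And>u. m * (norm u)\<^sup>2 \<le> Q u"
    using homogeneous_bounded_below[OF assms(1) Q_hom _ Q_pos] by auto
  obtain M where M: "M > 0" "\<And>u. \<bar>Q u\<bar> \<le> M * (norm u)\<^sup>2"
    using homogeneous_bounded_above[OF assms(1) Q_hom] by auto
  obtain g where g: "g > 0" "\<And>u. g * (norm u)\<^sup>2 \<le> - G u"
    using homogeneous_bounded_below[of "\<lambda>u. - G u" 2] assms(2) G_hom G_neg
    by (auto intro: continuous_intros)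
  obtain K where K: "K > 0" "\<And>u. \<bar>C u\<bar> \<le> K * norm u ^ 3"
    using homogeneous_bounded_above[OF assms(3) C_hom] by auto
  show ?thesis
  proof (rule that[of m M "g / (2 * M)" "g / (2 * K)"])
    show "g / (2 * M) > 0" "g / (2 * K) > 0" using g M K by auto
    fix u :: 'a
    assume "norm u < g / (2 * K)"
    \<comment> \<open>the cubic remainder is dominated by half of the quadratic decay\<close>
    then have "K * norm u \<le> g / 2" using K(1) by (simp add: field_simps)
    then have "(K * norm u) * (norm u)\<^sup>2 \<le> g / 2 * (norm u)\<^sup>2" by (rule mult_right_mono) simp
    then have "K * norm u ^ 3 \<le> g / 2 * (norm u)\<^sup>2" by (simp add: power2_eq_square power3_eq_cube ac_simps)
    then have "G u + C u \<le> - (g / 2) * (norm u)\<^sup>2"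
      using g(2)[of u] K(2)[of u] by linarith
    also have "\<dots> \<le> - (g / (2 * M)) * Q u"
      using M(2)[of u] g(1) M(1) by (simp add: field_simps)
    finally show "G u + C u \<le> - (g / (2 * M)) * Q u" .
  qed (use m M(1) abs_le_D1[OF M(2)] in auto)
qed

type_synonym state = "real \<times> real \<times> real \<times> real"

locale seir_normal_form =
  fixes h a b k1 k2 k3 :: real
begin

definition nf_linear :: "state \<Rightarrow> state" where
  "nf_linear = (\<lambda>(X, W, Z, D).
     (- h * X - (a - b) * Z + b * D, k1 * X - (k1 + k2) * W, k2 * W, - k2 * W - k3 * D))"

definition nf_quadratic :: "state \<Rightarrow> state" where
  "nf_quadratic = (\<lambda>(X, W, Z, D). (- a * X * Z, k1 * X * Z, 0, 0))"

definition nf_field :: "state \<Rightarrow> state" where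
  "nf_field u = nf_linear u + nf_quadratic u"

text \<open>
  The cross terms of lyap0 are chosen so that its derivative along nf_linear contains no Z
  (lemma lyap0_linear).  Hence lyap0 and its derivative are only semidefinite; the
  perturbation lyap_pert is positive on the kernels of both.
\<close>

definition lyap0 :: "state \<Rightarrow> state \<Rightarrow> real" where
  "lyap0 = (\<lambda>(X, W, Z, D) (X', W', Z', D'). X * X' + 2 * h * (k1 + k2) / k1\<^sup>2 * W * W'
     + (a - b) / k1 * (W * Z' + Z * W') + (k1 + k2) * (a - b) / (k1 * k2) * Z * Z'
     - b / k1 * (W * D' + D * W') + (k1 + k2 + k3) * b / (k1 * k2) * D * D')"

definition lyap_pert :: "state \<Rightarrow> state \<Rightarrow> real" where
  "lyap_pert = (\<lambda>(X, W, Z, D) (X', W', Z', D'). X * Z' + Z * X' + 2 * D * D')"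

definition lyap_form :: "real \<Rightarrow> state \<Rightarrow> state \<Rightarrow> real" where
  "lyap_form e u v = lyap0 u v + e * lyap_pert u v"

lemma lyap_form_commute: "lyap_form e u v = lyap_form e v u"
  by (simp add: lyap_form_def lyap0_def lyap_pert_def split_beta algebra_simps)

lemma lyap_form_add: "lyap_form e u (v + w) = lyap_form e u v + lyap_form e u w"
  by (simp add: lyap_form_def lyap0_def lyap_pert_def split_beta algebra_simps
      add_divide_distrib diff_divide_distrib)

lemma lyap_form_scaleR: "lyap_form e u (t *\<^sub>R v) = t * lyap_form e u v"
  by (simp add: lyap_form_def lyap0_def lyap_pert_def split_beta algebra_simps)

lemma lyap_form_scaleR_left: "lyap_form e (t *\<^sub>R u) v = t * lyap_form e u v"
  by (metis lyap_form_commute lyap_form_scaleR)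

lemma bounded_bilinear_lyap_form: "bounded_bilinear (lyap_form e)"
  unfolding bilinear_conv_bounded_bilinear[symmetric] bilinear_def linear_iff
  by (metis lyap_form_add lyap_form_scaleR lyap_form_commute real_scaleR_def)

lemma lyap_form_deriv: "((\<lambda>u. lyap_form e u u) has_derivative (\<lambda>v. 2 * lyap_form e u v)) (at u)"
proof -
  have "((\<lambda>u. lyap_form e u u) has_derivative (\<lambda>v. lyap_form e u v + lyap_form e v u)) (at u)"
    by (rule bounded_bilinear.FDERIV[OF bounded_bilinear_lyap_form has_derivative_ident has_derivative_ident])
  moreover have "(\<lambda>v. lyap_form e u v + lyap_form e v u) = (\<lambda>v. 2 * lyap_form e u v)"
    by (rule ext) (simp add: lyap_form_commute[of e _ u])
  ultimately show ?thesis by simp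
qed

lemma continuous_lyap_form:
  assumes "continuous_on UNIV g"
  shows "continuous_on UNIV (\<lambda>u. lyap_form e u (g u))"
  using bounded_bilinear.continuous_on[OF bounded_bilinear_lyap_form continuous_on_id assms] by simp

lemma nf_linear_scaleR: "nf_linear (t *\<^sub>R u) = t *\<^sub>R nf_linear u"
  by (simp add: nf_linear_def split_beta algebra_simps)

lemma nf_quadratic_scaleR: "nf_quadratic (t *\<^sub>R u) = t\<^sup>2 *\<^sub>R nf_quadratic u"
  by (simp add: nf_quadratic_def split_beta power2_eq_square algebra_simps)

lemma continuous_nf_linear: "continuous_on UNIV nf_linear"
  unfolding nf_linear_def split_beta by (intro continuous_intros)

lemma continuous_nf_quadratic: "continuous_on UNIV nf_quadratic"
  unfolding nf_quadratic_def split_beta by (intro continuous_intros)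

end

locale seir_endemic_normal_form = seir_normal_form +
  assumes b_nonneg: "0 \<le> b" and b_less_a: "b < a" and a_less_h: "a < h"
    and k1_pos: "k1 > 0" and k2_pos: "k2 > 0" and k3_pos: "k3 > 0"
begin

lemma lyap0_sos:
  "lyap0 (X, W, Z, D) (X, W, Z, D) = X\<^sup>2
     + (2 * h * (k1 + k2) / k1\<^sup>2 - (a - b) * k2 / (k1 * (k1 + k2)) - b * k2 / (k1 * (k1 + k2 + k3))) * W\<^sup>2
     + (a - b) / (k1 * k2 * (k1 + k2)) * ((k1 + k2) * Z + k2 * W)\<^sup>2
     + b / (k1 * k2 * (k1 + k2 + k3)) * ((k1 + k2 + k3) * D - k2 * W)\<^sup>2"
proof -
  define s K where "s = k1 + k2" and "K = s + k3"
  have "s \<noteq> 0" "K \<noteq> 0" "k1 \<noteq> 0" "k2 \<noteq> 0" using k1_pos k2_pos k3_pos by (auto simp: s_def K_def)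
  then show ?thesis unfolding lyap0_def s_def[symmetric] unfolding K_def[symmetric]
    by (simp add: field_simps power2_eq_square; simp add: algebra_simps)
qed

lemma lyap0_linear:
  "lyap0 (X, W, Z, D) (nf_linear (X, W, Z, D)) = - (h * (X - (k1 + k2) * W / k1)\<^sup>2
     + (h * (k1 + k2)\<^sup>2 / k1\<^sup>2 - k2 * a / k1) * W\<^sup>2 + k3 * (k1 + k2 + k3) * b / (k1 * k2) * D\<^sup>2)"
proof -
  have "k1 + k2 \<noteq> 0" "k1 + k2 + k3 \<noteq> 0" using k1_pos k2_pos k3_pos by auto
  then show ?thesis using k1_pos k2_pos unfolding lyap0_def nf_linear_def
    by (simp add: field_simps power2_eq_square; simp add: algebra_simps)
qed

lemma a_k1_k2_less_h: "a * (k1 * k2) < h * (k1 + k2)\<^sup>2"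
proof -
  have "a * (k1 * k2) < h * (k1 * k2)" using a_less_h k1_pos k2_pos by simp
  also have "\<dots> \<le> h * (k1 + k2)\<^sup>2"
    using a_less_h b_nonneg b_less_a k1_pos k2_pos
    by (intro mult_left_mono) (auto simp: power2_eq_square algebra_simps)
  finally show ?thesis .
qed

lemma lyap0_sos_coeff_pos:
  "2 * h * (k1 + k2) / k1\<^sup>2 - (a - b) * k2 / (k1 * (k1 + k2)) - b * k2 / (k1 * (k1 + k2 + k3)) > 0"
proof -
  define s where "s = k1 + k2"
  have s: "s > 0" using k1_pos k2_pos by (simp add: s_def)
  have "b * k2 / (k1 * (s + k3)) \<le> b * k2 / (k1 * s)"
    using b_nonneg k1_pos k2_pos k3_pos s by (intro divide_left_mono mult_left_mono) auto
  moreover have "a * k2 / (k1 * s) < 2 * h * s / k1\<^sup>2"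
  proof -
    have "a * k2 / (k1 * s) = a * (k1 * k2) / (k1\<^sup>2 * s)"
      using k1_pos s by (simp add: field_simps power2_eq_square)
    also have "\<dots> < h * s\<^sup>2 / (k1\<^sup>2 * s)"
      using a_k1_k2_less_h k1_pos s unfolding s_def[symmetric] by (intro divide_strict_right_mono) auto
    also have "\<dots> \<le> 2 * h * s / k1\<^sup>2"
      using k1_pos s a_less_h b_nonneg b_less_a by (simp add: field_simps power2_eq_square)
    finally show ?thesis .
  qed
  moreover have "(a - b) * k2 / (k1 * s) + b * k2 / (k1 * s) = a * k2 / (k1 * s)"
    by (simp add: add_divide_distrib[symmetric] algebra_simps)
  ultimately show ?thesis unfolding s_def[symmetric] by linarith
qed

lemma lyap0_linear_coeff_pos: "h * (k1 + k2)\<^sup>2 / k1\<^sup>2 - k2 * a / k1 > 0"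
proof -
  have "k2 * a / k1 = a * (k1 * k2) / k1\<^sup>2" using k1_pos by (simp add: field_simps power2_eq_square)
  also have "\<dots> < h * (k1 + k2)\<^sup>2 / k1\<^sup>2" using a_k1_k2_less_h k1_pos by (intro divide_strict_right_mono) auto
  finally show ?thesis by simp
qed

lemma lyap0_nonneg: "lyap0 u u \<ge> 0"
proof -
  obtain X W Z D where u: "u = (X, W, Z, D)" by (cases u) auto
  have "0 \<le> X\<^sup>2
     + (2 * h * (k1 + k2) / k1\<^sup>2 - (a - b) * k2 / (k1 * (k1 + k2)) - b * k2 / (k1 * (k1 + k2 + k3))) * W\<^sup>2
     + (a - b) / (k1 * k2 * (k1 + k2)) * ((k1 + k2) * Z + k2 * W)\<^sup>2
     + b / (k1 * k2 * (k1 + k2 + k3)) * ((k1 + k2 + k3) * D - k2 * W)\<^sup>2"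
    using lyap0_sos_coeff_pos b_nonneg b_less_a k1_pos k2_pos k3_pos
    by (intro add_nonneg_nonneg mult_nonneg_nonneg) auto
  then show ?thesis by (simp only: u lyap0_sos)
qed

lemma lyap0_eq_0:
  assumes "lyap0 (X, W, Z, D) (X, W, Z, D) = 0"
  shows "X = 0 \<and> W = 0 \<and> Z = 0 \<and> b * D = 0"
proof -
  define p where "p = 2 * h * (k1 + k2) / k1\<^sup>2 - (a - b) * k2 / (k1 * (k1 + k2))
    - b * k2 / (k1 * (k1 + k2 + k3))"
  have terms: "X\<^sup>2 \<ge> 0" "p * W\<^sup>2 \<ge> 0" "(a - b) / (k1 * k2 * (k1 + k2)) * ((k1 + k2) * Z + k2 * W)\<^sup>2 \<ge> 0"
    "b / (k1 * k2 * (k1 + k2 + k3)) * ((k1 + k2 + k3) * D - k2 * W)\<^sup>2 \<ge> 0"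
    using lyap0_sos_coeff_pos b_nonneg b_less_a k1_pos k2_pos k3_pos by (auto simp: p_def)
  have "X\<^sup>2 + p * W\<^sup>2 + (a - b) / (k1 * k2 * (k1 + k2)) * ((k1 + k2) * Z + k2 * W)\<^sup>2
      + b / (k1 * k2 * (k1 + k2 + k3)) * ((k1 + k2 + k3) * D - k2 * W)\<^sup>2 = 0"
    using assms by (simp only: lyap0_sos p_def)
  then have "X\<^sup>2 = 0" "p * W\<^sup>2 = 0" "(a - b) / (k1 * k2 * (k1 + k2)) * ((k1 + k2) * Z + k2 * W)\<^sup>2 = 0"
    "b / (k1 * k2 * (k1 + k2 + k3)) * ((k1 + k2 + k3) * D - k2 * W)\<^sup>2 = 0"
    using terms by linarith+
  then show ?thesis
    using lyap0_sos_coeff_pos b_nonneg b_less_a k1_pos k2_pos k3_pos by (auto simp: p_def add_pos_pos)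
qed

lemma lyap0_linear_nonpos: "lyap0 u (nf_linear u) \<le> 0"
proof -
  obtain X W Z D where u: "u = (X, W, Z, D)" by (cases u) auto
  have "0 \<le> h * (X - (k1 + k2) * W / k1)\<^sup>2 + (h * (k1 + k2)\<^sup>2 / k1\<^sup>2 - k2 * a / k1) * W\<^sup>2
      + k3 * (k1 + k2 + k3) * b / (k1 * k2) * D\<^sup>2"
    using lyap0_linear_coeff_pos a_less_h b_nonneg b_less_a k1_pos k2_pos k3_pos
    by (intro add_nonneg_nonneg mult_nonneg_nonneg) auto
  then show ?thesis by (simp only: u lyap0_linear)
qed

lemma lyap0_linear_eq_0:
  assumes "lyap0 (X, W, Z, D) (nf_linear (X, W, Z, D)) = 0"
  shows "X = 0 \<and> W = 0 \<and> b * D = 0"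
proof -
  define p where "p = h * (k1 + k2)\<^sup>2 / k1\<^sup>2 - k2 * a / k1"
  have terms: "h * (X - (k1 + k2) * W / k1)\<^sup>2 \<ge> 0" "p * W\<^sup>2 \<ge> 0"
    "k3 * (k1 + k2 + k3) * b / (k1 * k2) * D\<^sup>2 \<ge> 0"
    using lyap0_linear_coeff_pos a_less_h b_nonneg b_less_a k1_pos k2_pos k3_pos by (auto simp: p_def)
  have "h * (X - (k1 + k2) * W / k1)\<^sup>2 + p * W\<^sup>2 + k3 * (k1 + k2 + k3) * b / (k1 * k2) * D\<^sup>2 = 0"
    using assms by (simp only: lyap0_linear p_def)
  then have "h * (X - (k1 + k2) * W / k1)\<^sup>2 = 0" "p * W\<^sup>2 = 0" "k3 * (k1 + k2 + k3) * b / (k1 * k2) * D\<^sup>2 = 0"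
    using terms by linarith+
  then show ?thesis
    using lyap0_linear_coeff_pos a_less_h b_nonneg b_less_a k1_pos k2_pos k3_pos
    by (auto simp: p_def add_pos_pos)
qed

lemma lyap_form_pos:
  obtains \<epsilon> where "\<epsilon> > 0" "\<And>e u. 0 < e \<Longrightarrow> e \<le> \<epsilon> \<Longrightarrow> norm u = 1 \<Longrightarrow> lyap_form e u u > 0"
proof -
  have cont: "continuous_on UNIV (\<lambda>u. lyap0 u u)" "continuous_on UNIV (\<lambda>u. lyap_pert u u)"
    unfolding lyap0_def lyap_pert_def split_beta
    using k1_pos k2_pos by (auto intro!: continuous_intros)
  have kernel: "lyap_pert u u > 0" if "norm u = 1" "lyap0 u u = 0" for u
  proof -
    obtain X W Z D where u: "u = (X, W, Z, D)" by (cases u) auto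
    then have "X = 0" "W = 0" "Z = 0" using lyap0_eq_0[of X W Z D] that(2) by simp_all
    moreover have "u \<noteq> 0" using that(1) by auto
    ultimately show ?thesis by (auto simp: u lyap_pert_def zero_prod_def zero_less_mult_iff)
  qed
  obtain \<epsilon> where "\<epsilon> > 0"
      "\<And>e u. 0 < e \<Longrightarrow> e \<le> \<epsilon> \<Longrightarrow> norm u = 1 \<Longrightarrow> lyap0 u u + e * lyap_pert u u > 0"
    using finsler_sphere[OF cont lyap0_nonneg kernel] by blast
  then show ?thesis using that by (simp add: lyap_form_def)
qed

lemma lyap_form_linear_neg:
  obtains \<epsilon> where "\<epsilon> > 0"
    "\<And>e u. 0 < e \<Longrightarrow> e \<le> \<epsilon> \<Longrightarrow> norm u = 1 \<Longrightarrow> lyap_form e u (nf_linear u) < 0"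
proof -
  have cont: "continuous_on UNIV (\<lambda>u. - lyap0 u (nf_linear u))"
    "continuous_on UNIV (\<lambda>u. - lyap_pert u (nf_linear u))"
    unfolding lyap0_def lyap_pert_def nf_linear_def split_beta
    using k1_pos k2_pos by (auto intro!: continuous_intros)
  have nonneg: "- lyap0 u (nf_linear u) \<ge> 0" for u using lyap0_linear_nonpos[of u] by simp
  have kernel: "- lyap_pert u (nf_linear u) > 0" if "norm u = 1" "- lyap0 u (nf_linear u) = 0" for u
  proof -
    obtain X W Z D where u: "u = (X, W, Z, D)" by (cases u) auto
    then have "X = 0" "W = 0" "b * D = 0" using lyap0_linear_eq_0[of X W Z D] that(2) by simp_all
    then have "- lyap_pert u (nf_linear u) = (a - b) * Z\<^sup>2 + 2 * k3 * D\<^sup>2 - Z * (b * D)"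
      by (simp add: u lyap_pert_def nf_linear_def power2_eq_square algebra_simps)
    then have "- lyap_pert u (nf_linear u) = (a - b) * Z\<^sup>2 + 2 * k3 * D\<^sup>2"
      using \<open>b * D = 0\<close> by simp
    moreover have "Z \<noteq> 0 \<or> D \<noteq> 0" using that(1) u \<open>X = 0\<close> \<open>W = 0\<close> by auto
    ultimately show ?thesis using b_less_a k3_pos by (auto intro: add_pos_nonneg add_nonneg_pos)
  qed
  obtain \<epsilon> where \<epsilon>: "\<epsilon> > 0" "\<And>e u. 0 < e \<Longrightarrow> e \<le> \<epsilon> \<Longrightarrow> norm u = 1 \<Longrightarrow>
      - lyap0 u (nf_linear u) + e * - lyap_pert u (nf_linear u) > 0"
    using finsler_sphere[OF cont nonneg kernel] by blast
  show ?thesis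
  proof (rule that[OF \<epsilon>(1)])
    show "lyap_form e u (nf_linear u) < 0" if "0 < e" "e \<le> \<epsilon>" "norm u = 1" for e u
      using \<epsilon>(2)[OF that] by (simp add: lyap_form_def)
  qed
qed

lemma nf_exponential_lyapunov:
  obtains e m M c r where "m > 0" "M > 0" "c > 0" "r > 0"
    "\<And>u. m * (norm u)\<^sup>2 \<le> lyap_form e u u" "\<And>u. lyap_form e u u \<le> M * (norm u)\<^sup>2"
    "\<And>u. norm u < r \<Longrightarrow> 2 * lyap_form e u (nf_field u) \<le> - c * lyap_form e u u"
proof -
  obtain e1 where e1: "e1 > 0" "\<And>e u. 0 < e \<Longrightarrow> e \<le> e1 \<Longrightarrow> norm u = 1 \<Longrightarrow> lyap_form e u u > 0"
    using lyap_form_pos by blast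
  obtain e2 where e2: "e2 > 0"
    "\<And>e u. 0 < e \<Longrightarrow> e \<le> e2 \<Longrightarrow> norm u = 1 \<Longrightarrow> lyap_form e u (nf_linear u) < 0"
    using lyap_form_linear_neg by blast
  define e where "e = min e1 e2"
  have "e > 0" "e \<le> e1" "e \<le> e2" using e1 e2 by (auto simp: e_def)
  have cont: "continuous_on UNIV (\<lambda>u. lyap_form e u u)"
    "continuous_on UNIV (\<lambda>u. 2 * lyap_form e u (nf_linear u))"
    "continuous_on UNIV (\<lambda>u. 2 * lyap_form e u (nf_quadratic u))"
    using continuous_lyap_form[OF continuous_on_id] continuous_lyap_form[OF continuous_nf_linear]
      continuous_lyap_form[OF continuous_nf_quadratic]
    by (auto intro: continuous_on_mult_left)
  have hom: "lyap_form e (t *\<^sub>R u) (t *\<^sub>R u) = t\<^sup>2 * lyap_form e u u"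
    "2 * lyap_form e (t *\<^sub>R u) (nf_linear (t *\<^sub>R u)) = t\<^sup>2 * (2 * lyap_form e u (nf_linear u))"
    "2 * lyap_form e (t *\<^sub>R u) (nf_quadratic (t *\<^sub>R u)) = t ^ 3 * (2 * lyap_form e u (nf_quadratic u))"
    for t u
    by (simp_all add: lyap_form_scaleR lyap_form_scaleR_left nf_linear_scaleR nf_quadratic_scaleR
        power2_eq_square power3_eq_cube)
  have sign: "lyap_form e u u > 0" "2 * lyap_form e u (nf_linear u) < 0" if "norm u = 1" for u
    using e1(2)[OF \<open>e > 0\<close> \<open>e \<le> e1\<close> that] e2(2)[OF \<open>e > 0\<close> \<open>e \<le> e2\<close> that] by auto
  obtain m M c r where "m > 0" "M > 0" "c > 0" "r > 0"
    "\<And>u. m * (norm u)\<^sup>2 \<le> lyap_form e u u" "\<And>u. lyap_form e u u \<le> M * (norm u)\<^sup>2"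
    "\<And>u. norm u < r \<Longrightarrow>
      2 * lyap_form e u (nf_linear u) + 2 * lyap_form e u (nf_quadratic u) \<le> - c * lyap_form e u u"
    using local_quadratic_lyapunov[OF cont hom sign] by blast
  then show ?thesis
    using that[of m M c r e] by (simp add: nf_field_def lyap_form_add)
qed

lemma locally_asymptotically_stable_conjugate:
  fixes L :: "'a::euclidean_space \<Rightarrow> state"
  assumes "linear L" "inj L" "\<And>x. L (f x) = nf_field (L (x - xs))" and "f xs = 0"
  shows "locally_asymptotically_stable f xs"
proof (rule nf_exponential_lyapunov)
  fix e m M c r
  assume "m > 0" "M > 0" "c > 0" "r > 0"
    and "\<And>u. m * (norm u)\<^sup>2 \<le> lyap_form e u u" "\<And>u. lyap_form e u u \<le> M * (norm u)\<^sup>2"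
    and "\<And>u. norm u < r \<Longrightarrow> 2 * lyap_form e u (nf_field u) \<le> - c * lyap_form e u u"
  note lyap = this
  show ?thesis
  proof (rule exponential_lyapunov_change_coordinates[where Q = "\<lambda>u. lyap_form e u u"
        and DQ = "\<lambda>u v. 2 * lyap_form e u v", OF assms(1-3) lyap_form_deriv lyap(5-7) lyap(1-4)])
  qed (auto intro: exponential_lyapunov.locally_asymptotically_stable[where f = f and xs = xs, OF _ assms(4)])
qed

end

definition seir_coords :: "state \<Rightarrow> state \<Rightarrow> state" where
  "seir_coords = (\<lambda>(Ss, Es, Is, Rs) (S, E, I, R). (S / Ss, E / Es - I / Is, I / Is, R / Rs - I / Is))"

lemma linear_seir_coords: "linear (seir_coords xs)"
  by (rule linearI) (auto simp: seir_coords_def split_beta add_divide_distrib diff_divide_distrib algebra_simps)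

lemma inj_seir_coords:
  assumes "Ss \<noteq> 0" "Es \<noteq> 0" "Is \<noteq> 0" "Rs \<noteq> 0"
  shows "inj (seir_coords (Ss, Es, Is, Rs))"
  unfolding linear_injective_0[OF linear_seir_coords]
  using assms by (auto simp: seir_coords_def zero_prod_def)

lemma seir_field_normal_form:
  fixes \<Lambda> \<mu> \<beta> \<alpha> \<gamma> \<sigma> \<xi> \<Delta> Ss Es Is Rs :: real
  assumes pos: "Ss > 0" "Es > 0" "Is > 0" "Rs > 0"
    and eq: "seir_field \<Lambda> \<mu> \<beta> \<alpha> \<gamma> \<sigma> \<xi> \<Delta> (Ss, Es, Is, Rs) = 0"
  shows "seir_coords (Ss, Es, Is, Rs) (seir_field \<Lambda> \<mu> \<beta> \<alpha> \<gamma> \<sigma> \<xi> \<Delta> x)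
    = seir_normal_form.nf_field (\<mu> + \<beta> * (1 - \<sigma>) * Is) (\<beta> * (1 - \<sigma>) * Is) (\<xi> * Rs / Ss)
        (\<mu> + \<alpha>) (\<mu> + \<gamma> + \<Delta>) (\<mu> + \<xi>) (seir_coords (Ss, Es, Is, Rs) (x - (Ss, Es, Is, Rs)))"
proof -
  obtain S E I R where x: "x = (S, E, I, R)" by (cases x) auto
  define bb where "bb = \<beta> * (1 - \<sigma>)"
  have eq1: "\<Lambda> - \<mu> * Ss - bb * Ss * Is + \<xi> * Rs = 0"
    and eq2: "bb * Ss * Is - (\<mu> + \<alpha>) * Es = 0"
    and eq3: "\<alpha> * Es - (\<mu> + \<gamma>) * Is - \<Delta> * Is = 0"
    and eq4: "\<gamma> * Is - \<mu> * Rs - \<xi> * Rs = 0"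
    using eq by (simp_all add: seir_field_def bb_def zero_prod_def)
  have \<Lambda>_eq: "\<Lambda> = \<mu> * Ss + bb * Ss * Is - \<xi> * Rs" using eq1 by linarith
  have bb_eq: "bb = (\<mu> + \<alpha>) * Es / (Ss * Is)" using eq2 pos by (simp add: field_simps; linarith)
  have \<alpha>_eq: "\<alpha> = (\<mu> + \<gamma> + \<Delta>) * Is / Es" using eq3 pos by (simp add: field_simps; linarith)
  have \<gamma>_eq: "\<gamma> = (\<mu> + \<xi>) * Rs / Is" using eq4 pos by (simp add: field_simps; linarith)
  define X Z where "X = (S - Ss) / Ss" and "Z = (I - Is) / Is"
  define W D where "W = (E - Es) / Es - Z" and "D = (R - Rs) / Rs - Z"
  have field: "seir_coords (Ss, Es, Is, Rs) (seir_field \<Lambda> \<mu> \<beta> \<alpha> \<gamma> \<sigma> \<xi> \<Delta> x)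
    = ((\<Lambda> - \<mu> * S - bb * S * I + \<xi> * R) / Ss,
       (bb * S * I - (\<mu> + \<alpha>) * E) / Es - (\<alpha> * E - (\<mu> + \<gamma>) * I - \<Delta> * I) / Is,
       (\<alpha> * E - (\<mu> + \<gamma>) * I - \<Delta> * I) / Is,
       (\<gamma> * I - \<mu> * R - \<xi> * R) / Rs - (\<alpha> * E - (\<mu> + \<gamma>) * I - \<Delta> * I) / Is)"
    by (simp add: x seir_coords_def seir_field_def bb_def)
  have comp1: "(\<Lambda> - \<mu> * S - bb * S * I + \<xi> * R) / Ss = - (\<mu> + bb * Is) * X - (bb * Is - \<xi> * Rs / Ss) * Z
     + \<xi> * Rs / Ss * D - bb * Is * X * Z"
    unfolding \<Lambda>_eq X_def Z_def D_def using pos by (simp add: field_simps; simp add: algebra_simps)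
  have comp2: "(bb * S * I - (\<mu> + \<alpha>) * E) / Es = (\<mu> + \<alpha>) * (X + X * Z - W)"
    unfolding bb_eq X_def W_def Z_def using pos by (simp add: field_simps; simp add: algebra_simps)
  have comp3: "(\<alpha> * E - (\<mu> + \<gamma>) * I - \<Delta> * I) / Is = (\<mu> + \<gamma> + \<Delta>) * W"
    unfolding \<alpha>_eq W_def Z_def using pos by (simp add: field_simps; simp add: algebra_simps)
  have comp4: "(\<gamma> * I - \<mu> * R - \<xi> * R) / Rs = - (\<mu> + \<xi>) * D"
    unfolding \<gamma>_eq D_def Z_def using pos by (simp add: field_simps; simp add: algebra_simps)
  have coords: "seir_coords (Ss, Es, Is, Rs) (x - (Ss, Es, Is, Rs)) = (X, W, Z, D)"
    using pos by (simp add: x seir_coords_def X_def W_def Z_def D_def diff_divide_distrib)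
  show ?thesis
    unfolding bb_def[symmetric] field comp1 comp2 comp3 comp4 coords
    by (simp add: seir_normal_form.nf_field_def seir_normal_form.nf_linear_def
        seir_normal_form.nf_quadratic_def algebra_simps)
qed

lemma seir_equilibrium_flux_bound:
  fixes \<Lambda> \<mu> \<beta> \<alpha> \<gamma> \<sigma> \<xi> \<Delta> Ss Es Is Rs :: real
  assumes "\<mu> > 0" "\<Delta> \<ge> 0" "Ss > 0" "Es > 0" "Is > 0" "Rs > 0"
    and eq: "seir_field \<Lambda> \<mu> \<beta> \<alpha> \<gamma> \<sigma> \<xi> \<Delta> (Ss, Es, Is, Rs) = 0"
  shows "\<xi> * Rs / Ss < \<beta> * (1 - \<sigma>) * Is"
proof -
  have "\<beta> * (1 - \<sigma>) * Ss * Is = (\<mu> + \<alpha>) * Es" "\<alpha> * Es = (\<mu> + \<gamma> + \<Delta>) * Is"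
    "\<gamma> * Is = (\<mu> + \<xi>) * Rs"
    using eq by (simp_all add: seir_field_def zero_prod_def algebra_simps)
  moreover have "\<mu> * Rs > 0" "\<mu> * Is > 0" "\<mu> * Es > 0" "\<Delta> * Is \<ge> 0" using assms by auto
  \<comment> \<open>hence \<xi> Rs < \<gamma> Is < \<alpha> Es < \<beta> (1 - \<sigma>) Ss Is\<close>
  ultimately have "\<xi> * Rs < \<beta> * (1 - \<sigma>) * Is * Ss" by (simp add: algebra_simps)
  then show ?thesis using \<open>Ss > 0\<close> by (simp add: pos_divide_less_eq)
qed

theorem lemma4:
  fixes \<Lambda> \<mu> \<beta> \<alpha> \<gamma> \<delta> \<sigma> \<xi> N_old \<kappa> \<kappa>_old Ss Es Is Rs :: real
  assumes "\<Lambda> > 0" "\<mu> > 0" "\<beta> > 0" "\<alpha> > 0" "\<gamma> > 0" "\<delta> > 0"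
    and "0 \<le> \<sigma>" "\<sigma> < 1" "\<xi> \<ge> 0"
    and "0 \<le> N_old" "N_old \<le> 1" "0 \<le> \<kappa>" "\<kappa> \<le> 1" "0 \<le> \<kappa>_old" "\<kappa>_old \<le> 1"
    and "R0 \<Lambda> \<mu> \<beta> \<alpha> \<gamma> \<sigma> (covid_Delta \<delta> N_old \<kappa> \<kappa>_old) > 1"
    and "equilibrium (seir_field \<Lambda> \<mu> \<beta> \<alpha> \<gamma> \<sigma> \<xi> (covid_Delta \<delta> N_old \<kappa> \<kappa>_old)) (Ss, Es, Is, Rs)"
    and "Ss = \<Lambda> / (\<mu> * R0 \<Lambda> \<mu> \<beta> \<alpha> \<gamma> \<sigma> (covid_Delta \<delta> N_old \<kappa> \<kappa>_old))"
    and "Es > 0" "Is > 0" "Rs > 0"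
  shows "locally_asymptotically_stable
           (seir_field \<Lambda> \<mu> \<beta> \<alpha> \<gamma> \<sigma> \<xi> (covid_Delta \<delta> N_old \<kappa> \<kappa>_old)) (Ss, Es, Is, Rs)"
proof -
  define \<Delta> where "\<Delta> = covid_Delta \<delta> N_old \<kappa> \<kappa>_old"
  define f where "f = seir_field \<Lambda> \<mu> \<beta> \<alpha> \<gamma> \<sigma> \<xi> \<Delta>"
  have eq: "f (Ss, Es, Is, Rs) = 0" using assms(17) by (simp add: f_def \<Delta>_def equilibrium_def)
  have "Ss > 0" using assms(1,2,16) by (simp add: assms(18))
  have "\<Delta> \<ge> 0" using assms(6,10-15) by (simp add: \<Delta>_def covid_Delta_def)
  then interpret seir_endemic_normal_form "\<mu> + \<beta> * (1 - \<sigma>) * Is" "\<beta> * (1 - \<sigma>) * Is" "\<xi> * Rs / Ss"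
      "\<mu> + \<alpha>" "\<mu> + \<gamma> + \<Delta>" "\<mu> + \<xi>"
    using seir_equilibrium_flux_bound[OF assms(2) _ \<open>Ss > 0\<close> assms(19-21) eq[unfolded f_def]]
      assms(2,4,5,9,21) \<open>Ss > 0\<close>
    by unfold_locales simp_all
  have "locally_asymptotically_stable f (Ss, Es, Is, Rs)"
  proof (rule locally_asymptotically_stable_conjugate[where f = f and xs = "(Ss, Es, Is, Rs)",
        OF linear_seir_coords _ _ eq])
    show "inj (seir_coords (Ss, Es, Is, Rs))" using inj_seir_coords \<open>Ss > 0\<close> assms(19-21) by simp
    show "seir_coords (Ss, Es, Is, Rs) (f x) = nf_field (seir_coords (Ss, Es, Is, Rs) (x - (Ss, Es, Is, Rs)))"
      for x
      using seir_field_normal_form[OF \<open>Ss > 0\<close> assms(19-21) eq[unfolded f_def]] by (simp add: f_def)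
  qed
  then show ?thesis by (simp add: f_def \<Delta>_def)
qed

end
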